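(* Let $\alpha: I\to M$ be a unit-speed curve on an oriented surface $M\subset E^3$ with Darboux frame $\{T,V,U\}$ and geodesic torsion $\tau_g$. Let $\phi$ be an antiderivative of $\tau_g$ on $I$ and let $$\gamma(s)=\alpha(s)+\sin(\phi(s))\,V(s)+\cos(\phi(s))\,U(s),$$ and assume $\gamma$ is regular, i.e. $\gamma'(s)\neq 0$ for all $s$. Then $\gamma$ is a general helix if and only if $\alpha$ is a helical curve on $M$.
   Context: $M$ is an oriented surface in Euclidean 3-space $E^3$ and $\alpha:I\to M$ is a unit-speed curve with arc-length parameter $s$. Its Darboux frame $\{T,V,U\}$ consists of the unit tangent $T=\alpha'$, the unit surface normal $U$ of $M$ along $\alpha$, and $V=U\times T$; it satisfies $T'=k_gV+k_nU$, $V'=-k_gT+\tau_gU$, $U'=-k_nT-\tau_gV$, where $k_g,k_n,\tau_g$ are the geodesic curvature, normal curvature and geodesic torsion. A regular curve is a general helix if its unit tangent makes a constant angle with a fixed direction. $\alpha$ is a helical curve on $M$ if $\langle T,d\rangle$ is constant for some fixed unit vector $d$. *)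

theory Defs
  imports "HOL-Analysis.Analysis" "HOL-Analysis.Cross3"
begin

definition darboux_frame ::
  "real set \<Rightarrow> (real \<Rightarrow> real^3) \<Rightarrow> (real \<Rightarrow> real^3) \<Rightarrow> (real \<Rightarrow> real^3) \<Rightarrow> (real \<Rightarrow> real^3)
   \<Rightarrow> (real \<Rightarrow> real) \<Rightarrow> (real \<Rightarrow> real) \<Rightarrow> (real \<Rightarrow> real) \<Rightarrow> bool" where
  "darboux_frame I \<alpha> T V U kg kn tg \<longleftrightarrow>
     continuous_on I kg \<and> continuous_on I kn \<and> continuous_on I tg \<and>
     (\<forall>s\<in>I.
        (\<alpha> has_vector_derivative T s) (at s) \<and>
        norm (T s) = 1 \<and> norm (U s) = 1 \<and> T s \<bullet> U s = 0 \<and>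
        V s = cross3 (U s) (T s) \<and>
        (T has_vector_derivative (kg s *\<^sub>R V s + kn s *\<^sub>R U s)) (at s) \<and>
        (V has_vector_derivative (- kg s *\<^sub>R T s + tg s *\<^sub>R U s)) (at s) \<and>
        (U has_vector_derivative (- kn s *\<^sub>R T s - tg s *\<^sub>R V s)) (at s))"

definition general_helix :: "real set \<Rightarrow> (real \<Rightarrow> real^3) \<Rightarrow> bool" where
  "general_helix I \<gamma> \<longleftrightarrow>
     (\<forall>s\<in>I. \<gamma> differentiable (at s) \<and> vector_derivative \<gamma> (at s) \<noteq> 0) \<and>
     (\<exists>d c. norm d = 1 \<and>
        (\<forall>s\<in>I. (vector_derivative \<gamma> (at s) /\<^sub>R norm (vector_derivative \<gamma> (at s))) \<bullet> d = c))"

definition helical_curve :: "real set \<Rightarrow> (real \<Rightarrow> real^3) \<Rightarrow> bool" where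
  "helical_curve I T \<longleftrightarrow> (\<exists>d c. norm d = 1 \<and> (\<forall>s\<in>I. T s \<bullet> d = c))"

end

theory Submission
  imports Defs
begin

text \<open>Differentiating \<open>\<gamma> = \<alpha> + sin \<phi> V + cos \<phi> U\<close> with the Darboux equations, the
  \<open>V\<close>- and \<open>U\<close>-components cancel exactly because \<open>\<phi>' = \<tau>\<^sub>g\<close>, leaving
  \<open>\<gamma>' = (1 - k\<^sub>g sin \<phi> - k\<^sub>n cos \<phi>) T\<close>. Regularity makes this scalar factor nonvanishing, so by
  continuity it has constant sign on the interval \<open>I\<close>; hence the unit tangent of \<open>\<gamma>\<close> is
  \<open>T\<close> or \<open>-T\<close> throughout, and the two constant-angle conditions are the same.\<close>

lemma darboux_offset_has_vector_derivative:
  fixes \<alpha> T V U :: "real \<Rightarrow> real^3" and \<phi> :: "real \<Rightarrow> real" and kg kn tg :: real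
  assumes "(\<alpha> has_vector_derivative T s) (at s)"
    and "(V has_vector_derivative (- kg *\<^sub>R T s + tg *\<^sub>R U s)) (at s)"
    and "(U has_vector_derivative (- kn *\<^sub>R T s - tg *\<^sub>R V s)) (at s)"
    and "(\<phi> has_real_derivative tg) (at s)"
  shows "((\<lambda>s. \<alpha> s + sin (\<phi> s) *\<^sub>R V s + cos (\<phi> s) *\<^sub>R U s) has_vector_derivative
           (1 - kg * sin (\<phi> s) - kn * cos (\<phi> s)) *\<^sub>R T s) (at s)"
proof -
  have "((\<lambda>s. sin (\<phi> s)) has_real_derivative cos (\<phi> s) * tg) (at s)"
    and "((\<lambda>s. cos (\<phi> s)) has_real_derivative - sin (\<phi> s) * tg) (at s)"
    using assms(4) by (auto intro!: derivative_eq_intros)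
  then have "((\<lambda>s. \<alpha> s + sin (\<phi> s) *\<^sub>R V s + cos (\<phi> s) *\<^sub>R U s) has_vector_derivative
      T s + (sin (\<phi> s) *\<^sub>R (- kg *\<^sub>R T s + tg *\<^sub>R U s) + (cos (\<phi> s) * tg) *\<^sub>R V s)
          + (cos (\<phi> s) *\<^sub>R (- kn *\<^sub>R T s - tg *\<^sub>R V s) + (- sin (\<phi> s) * tg) *\<^sub>R U s)) (at s)"
    using assms(1-3) by (intro has_vector_derivative_add has_vector_derivative_scaleR)
  then show ?thesis
    by (simp add: algebra_simps)
qed

lemma connected_nonvanishing_imp_sgn_constant:
  fixes f :: "'a::topological_space \<Rightarrow> real"
  assumes "connected S" and "continuous_on S f" and "\<forall>x\<in>S. f x \<noteq> 0"
  obtains \<sigma> where "\<sigma> = 1 \<or> \<sigma> = -1" and "\<forall>x\<in>S. sgn (f x) = \<sigma>"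
proof (cases "\<exists>a\<in>S. f a > 0")
  case True
  then obtain a where a: "a \<in> S" "f a > 0" by blast
  have "f b > 0" if "b \<in> S" for b
  proof (rule ccontr)
    assume "\<not> f b > 0"
    then have "f b < 0" using assms(3) \<open>b \<in> S\<close> by force
    moreover have "connected (f ` S)"
      using assms(1,2) connected_continuous_image by blast
    ultimately have "0 \<in> f ` S"
      using a \<open>b \<in> S\<close> unfolding connected_iff_interval by (metis imageI less_imp_le)
    then show False using assms(3) by auto
  qed
  then show ?thesis using that[of 1] by simp
next
  case False
  then show ?thesis using that[of "-1"] assms(3) by (auto simp: sgn_if)
qed

lemma scaleR_unit_divide_norm:
  fixes t :: "'a::real_normed_vector"
  assumes "norm t = 1"
  shows "(a *\<^sub>R t) /\<^sub>R norm (a *\<^sub>R t) = sgn a *\<^sub>R t"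
  using assms by (simp add: real_sgn_eq field_simps)

lemma general_helix_iff_helical_curve_if_unit_tangent_parallel:
  fixes \<gamma> T :: "real \<Rightarrow> real^3" and \<sigma> :: real
  assumes "\<forall>s\<in>I. \<gamma> differentiable (at s) \<and> vector_derivative \<gamma> (at s) \<noteq> 0"
    and "\<sigma> \<noteq> 0"
    and "\<forall>s\<in>I. vector_derivative \<gamma> (at s) /\<^sub>R norm (vector_derivative \<gamma> (at s)) = \<sigma> *\<^sub>R T s"
  shows "general_helix I \<gamma> \<longleftrightarrow> helical_curve I T"
proof -
  have "(\<forall>s\<in>I. (\<sigma> *\<^sub>R T s) \<bullet> d = c) \<longleftrightarrow> (\<forall>s\<in>I. T s \<bullet> d = c / \<sigma>)" for d c
    using assms(2) by (simp add: field_simps)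
  then have "(\<exists>c. \<forall>s\<in>I. (\<sigma> *\<^sub>R T s) \<bullet> d = c) \<longleftrightarrow> (\<exists>c. \<forall>s\<in>I. T s \<bullet> d = c)" for d
    using assms(2) by (metis nonzero_mult_div_cancel_left)
  then show ?thesis
    using assms(1,3) unfolding general_helix_def helical_curve_def by simp
qed

theorem theorem3p3:
  fixes I :: "real set" and \<alpha> T V U \<gamma> :: "real \<Rightarrow> real^3"
    and kg kn tg \<phi> :: "real \<Rightarrow> real"
  assumes "is_interval I" and "open I"
    and "darboux_frame I \<alpha> T V U kg kn tg"
    and "\<forall>s\<in>I. (\<phi> has_real_derivative tg s) (at s)"
    and "\<forall>s. \<gamma> s = \<alpha> s + sin (\<phi> s) *\<^sub>R V s + cos (\<phi> s) *\<^sub>R U s"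
    and "\<forall>s\<in>I. \<gamma> differentiable (at s) \<and> vector_derivative \<gamma> (at s) \<noteq> 0"
  shows "general_helix I \<gamma> \<longleftrightarrow> helical_curve I T"
proof -
  define f where "f s = 1 - kg s * sin (\<phi> s) - kn s * cos (\<phi> s)" for s
  have frame: "\<forall>s\<in>I.
        (\<alpha> has_vector_derivative T s) (at s) \<and>
        (V has_vector_derivative (- kg s *\<^sub>R T s + tg s *\<^sub>R U s)) (at s) \<and>
        (U has_vector_derivative (- kn s *\<^sub>R T s - tg s *\<^sub>R V s)) (at s)"
    and T_unit: "\<forall>s\<in>I. norm (T s) = 1"
    and "continuous_on I kg" and "continuous_on I kn"
    using assms(3) unfolding darboux_frame_def by auto
  have \<gamma>_eq: "\<gamma> = (\<lambda>s. \<alpha> s + sin (\<phi> s) *\<^sub>R V s + cos (\<phi> s) *\<^sub>R U s)"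
    using assms(5) by auto
  have \<gamma>': "vector_derivative \<gamma> (at s) = f s *\<^sub>R T s" if "s \<in> I" for s
    unfolding f_def \<gamma>_eq
    using frame assms(4) that darboux_offset_has_vector_derivative vector_derivative_at
    by blast
  have f_nonzero: "\<forall>s\<in>I. f s \<noteq> 0"
    using assms(6) \<gamma>' by auto
  have "continuous_on I \<phi>"
    using assms(4) by (meson DERIV_isCont continuous_at_imp_continuous_on)
  then have "continuous_on I f"
    unfolding f_def using \<open>continuous_on I kg\<close> \<open>continuous_on I kn\<close>
    by (intro continuous_intros)
  then obtain \<sigma> where \<sigma>: "\<sigma> = 1 \<or> \<sigma> = -1" "\<forall>s\<in>I. sgn (f s) = \<sigma>"
    using connected_nonvanishing_imp_sgn_constant is_interval_connected[OF assms(1)] f_nonzero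
    by blast
  have unit_tangent:
    "\<forall>s\<in>I. vector_derivative \<gamma> (at s) /\<^sub>R norm (vector_derivative \<gamma> (at s)) = \<sigma> *\<^sub>R T s"
    using \<gamma>' \<sigma>(2) T_unit scaleR_unit_divide_norm by metis
  have "\<sigma> \<noteq> 0"
    using \<sigma>(1) by auto
  then show ?thesis
    by (rule general_helix_iff_helical_curve_if_unit_tangent_parallel[OF assms(6) _ unit_tangent])
qed

end
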